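(* Let $S$ be a semigroup, let $a\in S$, and define $P=\{x\in Sa : x\,\mathscr L\, ax\}$. Then the set of regular elements of the semigroup $Sa$ is $$\operatorname{Reg}(Sa)=\operatorname{Reg}(S)\cap P.$$
   Context: $Sa=\{xa:x\in S\}$ is the principal left ideal generated by $a$, regarded as a semigroup in its own right. For a semigroup $T$, $\operatorname{Reg}(T)=\{x\in T: x=xyx \text{ for some } y\in T\}$. $\mathscr L$ denotes Green's $\mathscr L$-relation on $S$: $x\,\mathscr L\, y$ iff $S^1x=S^1y$, where $S^1$ is $S$ with an identity adjoined if $S$ is not a monoid. *)

theory Defs
  imports Main
begin

text \<open>The ambient semigroup S is the type 'a of class semigroup_mult.\<close>

definition principal_left_ideal :: "'a::semigroup_mult \<Rightarrow> 'a set" where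
  "principal_left_ideal a = {x * a | x. True}"

text \<open>Regular elements of a subsemigroup T (T is regarded as a semigroup in its own right,
  so the inverse-candidate y must lie in T).\<close>
definition Reg :: "'a::semigroup_mult set \<Rightarrow> 'a set" where
  "Reg T = {x \<in> T. \<exists>y\<in>T. x = x * y * x}"

text \<open>S^1 x: the principal left ideal of x in S with identity adjoined.\<close>
definition S1_left :: "'a::semigroup_mult \<Rightarrow> 'a set" where
  "S1_left x = insert x {s * x | s. True}"

definition green_L :: "'a::semigroup_mult \<Rightarrow> 'a \<Rightarrow> bool" where
  "green_L x y \<longleftrightarrow> S1_left x = S1_left y"

end

theory Submission
  imports Defs
begin

text \<open>If x = x y x with y = t a in S a, then x = (x t)(a x), so x lies in S (a x);
  together with a x in S x this makes x and a x L-related. Conversely, if x = x y x and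
  x = v (a x), then x = x (y v a) x with y v a in S a. Regularity of x is what lets one
  ignore the identity adjoined in S^1, since x = (x y) x.\<close>

lemma mem_S1_left_iff: "y \<in> S1_left x \<longleftrightarrow> y = x \<or> (\<exists>s. y = s * x)"
  by (auto simp: S1_left_def)

lemma S1_left_subset_iff: "S1_left x \<subseteq> S1_left y \<longleftrightarrow> x \<in> S1_left y"
  by (auto simp: S1_left_def mult.assoc[symmetric])

lemma green_L_iff: "green_L x y \<longleftrightarrow> x \<in> S1_left y \<and> y \<in> S1_left x"
  unfolding green_L_def set_eq_subset by (simp add: S1_left_subset_iff)

lemma green_L_left_mult_iff: "green_L x (a * x) \<longleftrightarrow> x \<in> S1_left (a * x)"
  by (auto simp: green_L_iff mem_S1_left_iff)

lemma regular_mem_S1_left_iff: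
  assumes "x = x * y * x"
  shows "x \<in> S1_left z \<longleftrightarrow> (\<exists>v. x = v * z)"
  using assms by (auto simp: mem_S1_left_iff)

lemma mem_Reg_principal_left_ideal_iff:
  "x \<in> Reg (principal_left_ideal a) \<longleftrightarrow>
     x \<in> principal_left_ideal a \<and> (\<exists>t. x = x * (t * a) * x)"
  by (auto simp: Reg_def principal_left_ideal_def)

lemma mem_Reg_UNIV_iff: "x \<in> Reg UNIV \<longleftrightarrow> (\<exists>y. x = x * y * x)"
  by (simp add: Reg_def)

theorem theorem3p2:
  fixes a :: "'a::semigroup_mult"
  shows "Reg (principal_left_ideal a) =
         Reg (UNIV :: 'a set) \<inter> {x \<in> principal_left_ideal a. green_L x (a * x)}"
proof (rule set_eqI, rule iffI)
  fix x assume "x \<in> Reg (principal_left_ideal a)"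
  then obtain t where Sa: "x \<in> principal_left_ideal a" and reg: "x = x * (t * a) * x"
    by (auto simp: mem_Reg_principal_left_ideal_iff)
  have "x = (x * t) * (a * x)"
    using reg by (simp add: mult.assoc)
  then have "green_L x (a * x)"
    using reg by (auto simp: green_L_left_mult_iff regular_mem_S1_left_iff)
  with Sa reg show "x \<in> Reg UNIV \<inter> {x \<in> principal_left_ideal a. green_L x (a * x)}"
    by (auto simp: mem_Reg_UNIV_iff)
next
  fix x assume "x \<in> Reg UNIV \<inter> {x \<in> principal_left_ideal a. green_L x (a * x)}"
  then obtain y where Sa: "x \<in> principal_left_ideal a" and reg: "x = x * y * x"
    and L: "green_L x (a * x)"
    by (auto simp: mem_Reg_UNIV_iff)
  obtain v where v: "x = v * (a * x)"
    using L reg by (auto simp: green_L_left_mult_iff regular_mem_S1_left_iff)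
  have "x * ((y * v) * a) * x = x * y * (v * (a * x))"
    by (simp add: mult.assoc)
  also have "\<dots> = x"
    using v reg by simp
  finally have "x = x * ((y * v) * a) * x" ..
  with Sa show "x \<in> Reg (principal_left_ideal a)"
    by (auto simp: mem_Reg_principal_left_ideal_iff)
qed

end
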